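(* For every combinatorial auction with single-dimensional signals $s_i\in\{0,1,\dots,k-1\}$ ($k\ge2$ a power of $2$) and strong-SOS valuations, the mechanism $k$-SS is universally ex-post IC-IR and gives a $(2\log_2k+4)$-approximation to the optimal social welfare.
   Context: Setting: $n$ agents, $m$ items; agent $i$ has private signal $s_i$; value for bundle $T$ is $v_{iT}(\mathbf{s})\ge0$, public, weakly increasing in each coordinate, strictly in $s_i$. Strong-SOS: for every $j$, $\delta\ge0$, and profiles $\mathbf{s}'\le\mathbf{s}$ coordinate-wise, $v(\mathbf{s}'_{-j},s'_j+\delta)-v(\mathbf{s}'_{-j},s'_j)\ge v(\mathbf{s}_{-j},s_j+\delta)-v(\mathbf{s}_{-j},s_j)$; every $v_{iT}$ is strong-SOS. Allocations assign disjoint bundles. Random Bucket: choose $\ell$ uniformly in $\{1,\dots,\log_2k\}$; $N_{B_\ell}=\{i:s_i\ge2^{\ell-1}\}$; for $i\in N_{B_\ell}$, $\bar v_{iT}=v_{iT}(\mathbf{s}_{N_{\neg B_\ell}},\mathbf{2^{\ell-1}}_{N_{B_\ell}})$, else $0$; allocate a $\bar v$-welfare-maximizing allocation among $N_{B_\ell}$; agent receiving $\bar T_i$ pays $v_{i\bar T_i}(\mathbf{s}_{-i},2^{\ell-1}-1)$. Random Sampling: split agents uniformly at random into $A,B$; for $i\in B$, $\tilde v_{iT}=v_{iT}(\mathbf{s}_A,\mathbf{0}_B)$, for $i\in A$, $\tilde v_{iT}=0$; allocate a $\tilde v$-welfare-maximizing allocation among $B$; no payments. $k$-SS: run Random Bucket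 with probability $\frac{\log_2k}{\log_2k+2}$, otherwise Random Sampling. *)

theory Defs
  imports "HOL-Probability.Probability"
begin

text \<open>A valuation profile
  v i T s is the value of agent i for bundle T at signal profile s.\<close>

definition in_dom :: "nat \<Rightarrow> ('a \<Rightarrow> nat) \<Rightarrow> bool" where
  "in_dom k s \<longleftrightarrow> (\<forall>j. s j < k)"

definition weakly_incr_on :: "nat \<Rightarrow> (('a \<Rightarrow> nat) \<Rightarrow> real) \<Rightarrow> bool" where
  "weakly_incr_on k f \<longleftrightarrow>
     (\<forall>s j \<delta>. in_dom k s \<longrightarrow> s j + \<delta> < k \<longrightarrow> f s \<le> f (s(j := s j + \<delta>)))"

definition strictly_incr_in_on :: "nat \<Rightarrow> 'a \<Rightarrow> (('a \<Rightarrow> nat) \<Rightarrow> real) \<Rightarrow> bool" where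
  "strictly_incr_in_on k i f \<longleftrightarrow>
     (\<forall>s \<delta>. in_dom k s \<longrightarrow> 0 < \<delta> \<longrightarrow> s i + \<delta> < k \<longrightarrow> f s < f (s(i := s i + \<delta>)))"

definition strong_SOS_on :: "nat \<Rightarrow> (('a \<Rightarrow> nat) \<Rightarrow> real) \<Rightarrow> bool" where
  "strong_SOS_on k f \<longleftrightarrow>
     (\<forall>s s' j \<delta>. in_dom k s \<longrightarrow> (\<forall>i. s' i \<le> s i) \<longrightarrow> s j + \<delta> < k \<longrightarrow>
        f (s'(j := s' j + \<delta>)) - f s' \<ge> f (s(j := s j + \<delta>)) - f s)"

text \<open>Standing assumptions on the valuations.  Values of the empty bundle are
  normalised to 0 (strict monotonicity is therefore required for nonempty bundles).\<close>
definition valid_valuations :: "nat \<Rightarrow> ('a \<Rightarrow> 'b set \<Rightarrow> ('a \<Rightarrow> nat) \<Rightarrow> real) \<Rightarrow> bool" where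
  "valid_valuations k v \<longleftrightarrow>
     (\<forall>i T s. in_dom k s \<longrightarrow> 0 \<le> v i T s) \<and>
     (\<forall>i s. v i {} s = 0) \<and>
     (\<forall>i T. weakly_incr_on k (v i T)) \<and>
     (\<forall>i T. T \<noteq> {} \<longrightarrow> strictly_incr_in_on k i (v i T)) \<and>
     (\<forall>i T. strong_SOS_on k (v i T))"

definition is_alloc :: "('a \<Rightarrow> 'b set) \<Rightarrow> bool" where
  "is_alloc X \<longleftrightarrow> (\<forall>i j. i \<noteq> j \<longrightarrow> X i \<inter> X j = {})"

definition alloc_among :: "'a set \<Rightarrow> ('a \<Rightarrow> 'b set) \<Rightarrow> bool" where
  "alloc_among S X \<longleftrightarrow> is_alloc X \<and> (\<forall>i. i \<notin> S \<longrightarrow> X i = {})"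

definition welfare :: "('a \<Rightarrow> 'b set \<Rightarrow> real) \<Rightarrow> ('a \<Rightarrow> 'b set) \<Rightarrow> real" where
  "welfare w X = (\<Sum>i\<in>UNIV. w i (X i))"

definition opt_welfare ::
  "('a::finite \<Rightarrow> 'b::finite set \<Rightarrow> ('a \<Rightarrow> nat) \<Rightarrow> real) \<Rightarrow> ('a \<Rightarrow> nat) \<Rightarrow> real" where
  "opt_welfare v s = Max ((\<lambda>X. welfare (\<lambda>i T. v i T s) X) ` {X. is_alloc X})"

text \<open>A (deterministic) tie-breaking rule: sel S w is a w-welfare-maximizing
  allocation among the agents in S.\<close>
definition welfare_selector :: "('a set \<Rightarrow> ('a \<Rightarrow> 'b set \<Rightarrow> real) \<Rightarrow> ('a \<Rightarrow> 'b set)) \<Rightarrow> bool" where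
  "welfare_selector sel \<longleftrightarrow>
     (\<forall>S w. alloc_among S (sel S w) \<and>
            (\<forall>X. alloc_among S X \<longrightarrow> welfare w X \<le> welfare w (sel S w)))"

type_synonym ('a, 'b) outcome = "('a \<Rightarrow> 'b set) \<times> ('a \<Rightarrow> real)"

definition bucket_mech ::
  "('a set \<Rightarrow> ('a \<Rightarrow> 'b set \<Rightarrow> real) \<Rightarrow> ('a \<Rightarrow> 'b set)) \<Rightarrow>
   ('a \<Rightarrow> 'b set \<Rightarrow> ('a \<Rightarrow> nat) \<Rightarrow> real) \<Rightarrow> nat \<Rightarrow> ('a \<Rightarrow> nat) \<Rightarrow> ('a, 'b) outcome" where
  "bucket_mech sel v l s =
     (let t = 2 ^ (l - 1);
          NB = {i. t \<le> s i};
          sbar = (\<lambda>j. if j \<in> NB then t else s j);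
          vbar = (\<lambda>i T. if i \<in> NB then v i T sbar else 0);
          X = sel NB vbar
      in (X, \<lambda>i. if i \<in> NB then v i (X i) (s(i := t - 1)) else 0))"

definition sampling_mech ::
  "('a set \<Rightarrow> ('a \<Rightarrow> 'b set \<Rightarrow> real) \<Rightarrow> ('a \<Rightarrow> 'b set)) \<Rightarrow>
   ('a \<Rightarrow> 'b set \<Rightarrow> ('a \<Rightarrow> nat) \<Rightarrow> real) \<Rightarrow> 'a set \<Rightarrow> ('a \<Rightarrow> nat) \<Rightarrow> ('a, 'b) outcome" where
  "sampling_mech sel v A s =
     (let sA = (\<lambda>j. if j \<in> A then s j else 0);
          vt = (\<lambda>i T. if i \<notin> A then v i T sA else 0);
          X = sel (- A) vt
      in (X, \<lambda>i. 0))"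

definition log2nat :: "nat \<Rightarrow> nat" where
  "log2nat k = nat \<lfloor>log 2 (real k)\<rfloor>"

text \<open>The random coins of k-SS (drawn independently of the reports):
  Inl l = Random Bucket with bucket l (uniform in {1..log2 k}),
  Inr A = Random Sampling with A the sampled side (uniform subset, B = -A).\<close>
definition kSS_coins :: "nat \<Rightarrow> (nat + 'a::finite set) pmf" where
  "kSS_coins k =
     bind_pmf (bernoulli_pmf (real (log2nat k) / (real (log2nat k) + 2)))
       (\<lambda>b. if b then map_pmf Inl (pmf_of_set {1..log2nat k})
             else map_pmf Inr (pmf_of_set UNIV))"

definition kSS_mech ::
  "('a set \<Rightarrow> ('a \<Rightarrow> 'b set \<Rightarrow> real) \<Rightarrow> ('a \<Rightarrow> 'b set)) \<Rightarrow>
   ('a \<Rightarrow> 'b set \<Rightarrow> ('a \<Rightarrow> nat) \<Rightarrow> real) \<Rightarrow> nat + 'a set \<Rightarrow> ('a \<Rightarrow> nat) \<Rightarrow> ('a, 'b) outcome" where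
  "kSS_mech sel v c s =
     (case c of Inl l \<Rightarrow> bucket_mech sel v l s | Inr A \<Rightarrow> sampling_mech sel v A s)"

definition utility ::
  "('a \<Rightarrow> 'b set \<Rightarrow> ('a \<Rightarrow> nat) \<Rightarrow> real) \<Rightarrow> ('a \<Rightarrow> nat) \<Rightarrow> 'a \<Rightarrow> ('a, 'b) outcome \<Rightarrow> real" where
  "utility v s i o' = v i (fst o' i) s - snd o' i"

definition ex_post_IC_IR ::
  "nat \<Rightarrow> ('a \<Rightarrow> 'b set \<Rightarrow> ('a \<Rightarrow> nat) \<Rightarrow> real) \<Rightarrow> (('a \<Rightarrow> nat) \<Rightarrow> ('a, 'b) outcome) \<Rightarrow> bool" where
  "ex_post_IC_IR k v M \<longleftrightarrow>
     (\<forall>s i. in_dom k s \<longrightarrow>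
        0 \<le> utility v s i (M s) \<and>
        (\<forall>r < k. utility v s i (M (s(i := r))) \<le> utility v s i (M s)))"

end

theory Submission
  imports Defs
begin

text \<open>For a fixed bucket l Random Bucket is a posted-threshold mechanism:
  agent i wins iff it reports at least 2^(l-1), the bundle it then receives does not
  depend on its report (all bucket members are evaluated at signal 2^(l-1)), and it
  pays its value at signal 2^(l-1) - 1.  Random Sampling allocates only to agents of B,
  at values computed from the reports of A.

  Write the optimum as \<Sum>i D i + \<Sum>i Z i, with Z i the value of agent i's
  optimal bundle when its own signal is zeroed and D i the increment caused by its own
  signal.  If s i lies in bucket [t, 2t), strong-SOS bounds the increment from 0 to t and,
  since s i - t \<le> t, also the increment from t to s i by the increment at the bucket
  profile, so D i is at most twice the bucket value; summing over buckets Random Bucket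
  earns \<Sum>i D i / 2.  Applied to a split A, B of the other agents, strong-SOS gives
  Z i \<le> v(s_A) + v(s_B); as i lands in B with probability 1/2 and each side is
  equally likely to be the sampled one, Random Sampling earns \<Sum>i Z i / 4.  The mixing
  weights log k/(log k + 2) and 2/(log k + 2) turn both into OPT/(2 log k + 4).\<close>

lemma in_dom_mono: "in_dom k q \<Longrightarrow> \<forall>j. p j \<le> q j \<Longrightarrow> in_dom k p"
  unfolding in_dom_def using le_less_trans by blast

lemma weakly_incr_on_mono:
  fixes f :: "('a::finite \<Rightarrow> nat) \<Rightarrow> real"
  assumes f: "weakly_incr_on k f" and q: "in_dom k q" and pq: "\<forall>j. p j \<le> q j"
  shows "f p \<le> f q"
proof -
  have "f p \<le> f (override_on p q C)" if "finite C" for C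
    using that
  proof (induction C rule: finite_induct)
    case empty
    then show ?case by simp
  next
    case (insert x C)
    let ?b = "override_on p q C"
    have "in_dom k ?b"
      by (rule in_dom_mono[OF q]) (use pq in \<open>simp add: override_on_def\<close>)
    moreover have "?b x + (q x - p x) < k"
      using q pq insert.hyps unfolding in_dom_def by (simp add: le_add_diff_inverse)
    ultimately have "f ?b \<le> f (?b(x := ?b x + (q x - p x)))"
      using f unfolding weakly_incr_on_def by blast
    also have "?b(x := ?b x + (q x - p x)) = override_on p q (insert x C)"
      using insert.hyps pq by (simp add: override_on_insert le_add_diff_inverse)
    finally show ?case
      using insert.IH by linarith
  qed
  from this[of UNIV] show ?thesis
    by (simp add: override_on_def)
qed

lemma strong_SOS_onD:
  "strong_SOS_on k f \<Longrightarrow> in_dom k s \<Longrightarrow> \<forall>i. s' i \<le> s i \<Longrightarrow> s j + \<delta> < k \<Longrightarrow>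
    f (s(j := s j + \<delta>)) - f s \<le> f (s'(j := s' j + \<delta>)) - f s'"
  unfolding strong_SOS_on_def by blast

lemma strong_SOS_on_override:
  fixes f :: "('a::finite \<Rightarrow> nat) \<Rightarrow> real"
  assumes f: "strong_SOS_on k f" and p: "in_dom k p" and s: "in_dom k s"
    and p'p: "\<forall>j. p' j \<le> p j" and C: "\<forall>j\<in>C. p' j = p j \<and> p j \<le> s j"
  shows "f (override_on p s C) - f p \<le> f (override_on p' s C) - f p'"
  using finite[of C] C
proof (induction C rule: finite_induct)
  case empty
  then show ?case by simp
next
  case (insert x C)
  let ?b = "override_on p s C" and ?b' = "override_on p' s C" and ?d = "s x - p x"
  have "in_dom k ?b"
    using p s unfolding in_dom_def override_on_def by auto
  moreover have "\<forall>j. ?b' j \<le> ?b j"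
    using p'p by (simp add: override_on_def)
  moreover have bx: "?b x = p x" "?b' x = p x"
    using insert by auto
  moreover have "?b x + ?d < k"
    using s insert.prems bx unfolding in_dom_def by auto
  ultimately have "f (?b(x := ?b x + ?d)) - f ?b \<le> f (?b'(x := ?b' x + ?d)) - f ?b'"
    by (intro strong_SOS_onD[OF f]) auto
  moreover have "?b(x := ?b x + ?d) = override_on p s (insert x C)"
    "?b'(x := ?b' x + ?d) = override_on p' s (insert x C)"
    using insert bx by (auto simp: override_on_insert)
  ultimately show ?case
    using insert by fastforce
qed

section \<open>Two consequences of strong-SOS for a single agent\<close>

lemma strong_SOS_bucket_bound:
  fixes f :: "('a::finite \<Rightarrow> nat) \<Rightarrow> real"
  assumes mono: "weakly_incr_on k f" and sos: "strong_SOS_on k f"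
    and nonneg: "\<And>q. in_dom k q \<Longrightarrow> 0 \<le> f q"
    and s: "in_dom k s" and t: "t \<le> s i" "s i < 2 * t"
    and sb: "\<forall>j. sb j \<le> s j" "sb i = t"
  shows "f s - f (s(i := 0)) \<le> 2 * f sb"
proof -
  have sik: "s i < k"
    using s unfolding in_dom_def by blast
  have dom_t: "in_dom k (s(i := t))" and dom_0: "in_dom k (s(i := 0))"
    by (rule in_dom_mono[OF s]; use t in simp)+
  have "f s - f (s(i := t)) \<le> f (s(i := s i - t)) - f (s(i := 0))"
    using strong_SOS_onD[OF sos dom_t, of "s(i := 0)" i "s i - t"] t sik by simp
  also have "f (s(i := s i - t)) \<le> f (s(i := t))"
    by (rule weakly_incr_on_mono[OF mono dom_t]) (use t in simp)
  finally have upper: "f s - f (s(i := t)) \<le> f (s(i := t)) - f (s(i := 0))"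
    by linarith
  have "f (s(i := t)) - f (s(i := 0)) \<le> f sb - f (sb(i := 0))"
    using strong_SOS_onD[OF sos dom_0, of "sb(i := 0)" i t] sb t sik
    by (simp add: fun_upd_idem)
  moreover have "0 \<le> f (sb(i := 0))"
    by (intro nonneg in_dom_mono[OF dom_0]) (use sb in simp)
  ultimately show ?thesis
    using upper by linarith
qed

lemma strong_SOS_split_bound:
  fixes f :: "('a::finite \<Rightarrow> nat) \<Rightarrow> real"
  assumes sos: "strong_SOS_on k f"
    and nonneg: "\<And>q. in_dom k q \<Longrightarrow> 0 \<le> f q"
    and s: "in_dom k s" and AB: "A \<inter> B = {}" "A \<union> B = - {i}"
  shows "f (s(i := 0)) \<le> f (\<lambda>j. if j \<in> A then s j else 0) + f (\<lambda>j. if j \<in> B then s j else 0)"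
proof -
  let ?sB = "\<lambda>j. if j \<in> B then s j else 0" and ?zero = "\<lambda>j::'a. 0::nat"
  have "in_dom k ?sB"
    by (rule in_dom_mono[OF s]) simp
  then have "f (override_on ?sB s A) - f ?sB \<le> f (override_on ?zero s A) - f ?zero"
    by (rule strong_SOS_on_override[OF sos _ s]) (use AB in auto)
  moreover have "override_on ?sB s A = s(i := 0)"
    using AB by (auto simp: override_on_def fun_eq_iff)
  moreover have "override_on ?zero s A = (\<lambda>j. if j \<in> A then s j else 0)"
    by (auto simp: override_on_def)
  ultimately have "f (s(i := 0)) - f ?sB \<le> f (\<lambda>j. if j \<in> A then s j else 0) - f ?zero"
    by simp
  moreover have "0 \<le> f ?zero"
    by (intro nonneg in_dom_mono[OF s]) simp
  ultimately show ?thesis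
    by linarith
qed

lemma card_subsets_avoiding: "card (UNIV :: 'a::finite set set) = 2 * card {A :: 'a set. i \<notin> A}"
proof -
  have "{A :: 'a set. i \<notin> A} = Pow (- {i})"
    by auto
  then have "card {A :: 'a set. i \<notin> A} = 2 ^ (CARD('a) - 1)"
    by (simp add: card_Pow Compl_eq_Diff_UNIV)
  moreover have "card (UNIV :: 'a set set) = 2 ^ CARD('a)"
    by (metis Pow_UNIV card_Pow finite_class.finite_UNIV)
  moreover have "0 < CARD('a)"
    by simp
  ultimately show ?thesis
    by (metis Suc_diff_1 power_Suc)
qed

lemma strong_SOS_sampling_bound:
  fixes f :: "('a::finite \<Rightarrow> nat) \<Rightarrow> real"
  assumes sos: "strong_SOS_on k f"
    and nonneg: "\<And>q. in_dom k q \<Longrightarrow> 0 \<le> f q"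
    and s: "in_dom k s"
  shows "real (card (UNIV :: 'a set set)) / 4 * f (s(i := 0))
     \<le> (\<Sum>A\<in>UNIV. if i \<notin> A then f (\<lambda>j. if j \<in> A then s j else 0) else 0)"
proof -
  define S where "S = {A :: 'a set. i \<notin> A}"
  define g where "g = (\<lambda>A. f (\<lambda>j. if j \<in> A then s j else 0))"
  define co where "co = (\<lambda>A :: 'a set. - insert i A)"
  have co_co: "co (co A) = A" if "i \<notin> A" for A
    using that by (auto simp: co_def)
  have co_avoids: "i \<notin> co A" for A
    by (simp add: co_def)
  have sum_S: "(\<Sum>A\<in>UNIV. if i \<notin> A then g A else 0) = sum g S"
    unfolding S_def by (simp add: sum.inter_filter[symmetric])
  have sum_co: "sum g S = sum (g \<circ> co) S"
    by (rule sum.reindex_bij_witness[of S co co]) (auto simp: S_def co_co co_avoids)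
  have "real (card S) * f (s(i := 0)) = (\<Sum>A\<in>S. f (s(i := 0)))"
    by simp
  also have "\<dots> \<le> (\<Sum>A\<in>S. g A + g (co A))"
    by (intro sum_mono, unfold g_def, rule strong_SOS_split_bound[OF sos nonneg s])
       (auto simp: S_def co_def)
  also have "\<dots> = 2 * sum g S"
    using sum_co by (simp add: sum.distrib)
  finally show ?thesis
    using card_subsets_avoiding[of i] sum_S unfolding S_def g_def by simp
qed

locale auction =
  fixes k :: nat
    and v :: "'a::finite \<Rightarrow> 'b::finite set \<Rightarrow> ('a \<Rightarrow> nat) \<Rightarrow> real"
    and sel :: "'a set \<Rightarrow> ('a \<Rightarrow> 'b set \<Rightarrow> real) \<Rightarrow> ('a \<Rightarrow> 'b set)"
  assumes valid: "valid_valuations k v"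
    and selector: "welfare_selector sel"
begin

lemma v_nonneg: "in_dom k s \<Longrightarrow> 0 \<le> v i T s"
  using valid by (simp add: valid_valuations_def)

lemma v_empty [simp]: "v i {} s = 0"
  using valid by (simp add: valid_valuations_def)

lemma v_weakly_incr: "weakly_incr_on k (v i T)"
  using valid by (simp add: valid_valuations_def)

lemma v_strong_SOS: "strong_SOS_on k (v i T)"
  using valid by (simp add: valid_valuations_def)

lemma v_mono: "in_dom k q \<Longrightarrow> \<forall>j. p j \<le> q j \<Longrightarrow> v i T p \<le> v i T q"
  by (rule weakly_incr_on_mono[OF v_weakly_incr])

lemma sel_outside [simp]: "i \<notin> S \<Longrightarrow> sel S w i = {}"
  using selector by (simp add: welfare_selector_def alloc_among_def)

lemma sel_optimal: "alloc_among S X \<Longrightarrow> welfare w X \<le> welfare w (sel S w)"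
  using selector by (simp add: welfare_selector_def)

lemma welfare_sel_lower_bound:
  assumes s: "in_dom k s" and below: "\<forall>j. p j \<le> s j" and Y: "alloc_among S Y"
  shows "welfare (\<lambda>i T. if i \<in> S then v i T p else 0) Y
     \<le> welfare (\<lambda>i T. v i T s) (sel S (\<lambda>i T. if i \<in> S then v i T p else 0))"
proof -
  let ?w = "\<lambda>i T. if i \<in> S then v i T p else 0" and ?X = "sel S (\<lambda>i T. if i \<in> S then v i T p else 0)"
  have "welfare ?w Y \<le> welfare ?w ?X"
    by (rule sel_optimal[OF Y])
  also have "\<dots> \<le> welfare (\<lambda>i T. v i T s) ?X"
    unfolding welfare_def by (intro sum_mono) (simp add: v_mono[OF s below] v_nonneg[OF s])
  finally show ?thesis .
qed

section \<open>Incentive compatibility\<close>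

lemma bucket_mech_utility_low:
  "r i < 2 ^ (l - 1) \<Longrightarrow> utility v s i (bucket_mech sel v l r) = 0"
  by (simp add: bucket_mech_def Let_def utility_def)

lemma bucket_mech_utility_high:
  "2 ^ (l - 1) \<le> r i \<Longrightarrow> utility v s i (bucket_mech sel v l r) =
     v i (fst (bucket_mech sel v l r) i) s
       - v i (fst (bucket_mech sel v l r) i) (r(i := 2 ^ (l - 1) - 1))"
  by (simp add: bucket_mech_def Let_def utility_def)

lemma bucket_mech_utility_report_above:
  assumes "2 ^ (l - 1) \<le> r" "2 ^ (l - 1) \<le> s i"
  shows "utility v s i (bucket_mech sel v l (s(i := r))) = utility v s i (bucket_mech sel v l s)"
proof -
  let ?t = "2 ^ (l - 1) :: nat"
  have buckets: "{j. ?t \<le> (s(i := r)) j} = {j. ?t \<le> s j}"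
    using assms by auto
  have capped: "(\<lambda>j. if j \<in> {j. ?t \<le> s j} then ?t else (s(i := r)) j)
      = (\<lambda>j. if j \<in> {j. ?t \<le> s j} then ?t else s j)"
    using assms by auto
  show ?thesis
    using assms unfolding bucket_mech_def Let_def utility_def buckets capped by simp
qed

lemma bucket_mech_IR:
  assumes s: "in_dom k s"
  shows "0 \<le> utility v s i (bucket_mech sel v l s)"
proof (cases "2 ^ (l - 1) \<le> s i")
  case True
  then show ?thesis
    using bucket_mech_utility_high v_mono[OF s, of "s(i := 2 ^ (l - 1) - 1)"] by simp
next
  case False
  then show ?thesis
    using bucket_mech_utility_low by simp
qed

lemma bucket_mech_IC_IR:
  assumes l: "2 ^ (l - 1) < k"
  shows "ex_post_IC_IR k v (bucket_mech sel v l)"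
  unfolding ex_post_IC_IR_def
proof (intro allI impI conjI)
  fix s :: "'a \<Rightarrow> nat" and i
  assume s: "in_dom k s"
  let ?t = "2 ^ (l - 1) :: nat"
  show truthful: "0 \<le> utility v s i (bucket_mech sel v l s)"
    by (rule bucket_mech_IR[OF s])
  show "utility v s i (bucket_mech sel v l (s(i := r))) \<le> utility v s i (bucket_mech sel v l s)"
    if "r < k" for r
  proof -
    consider "r < ?t" | "?t \<le> r" "?t \<le> s i" | "?t \<le> r" "s i < ?t"
      by linarith
    then show ?thesis
    proof cases
      case 1
      then show ?thesis
        using bucket_mech_utility_low[of "s(i := r)"] truthful by simp
    next
      case 2
      then show ?thesis
        using bucket_mech_utility_report_above by simp
    next
      case 3
      have "in_dom k (s(i := ?t - 1))"
        using s l unfolding in_dom_def by auto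
      then have "v i T s \<le> v i T (s(i := ?t - 1))" for T
        by (rule v_mono) (use 3 in auto)
      then have "utility v s i (bucket_mech sel v l (s(i := r))) \<le> 0"
        using bucket_mech_utility_high[of l "s(i := r)" i s] 3 by simp
      then show ?thesis
        using truthful by linarith
    qed
  qed
qed

lemma sampling_mech_IC_IR: "ex_post_IC_IR k v (sampling_mech sel v A)"
  unfolding ex_post_IC_IR_def
proof (intro allI impI conjI)
  fix s :: "'a \<Rightarrow> nat" and i
  assume s: "in_dom k s"
  show "0 \<le> utility v s i (sampling_mech sel v A s)"
    using v_nonneg[OF s] by (simp add: sampling_mech_def Let_def utility_def)
  have "(\<lambda>j. if j \<in> A then (s(i := r)) j else 0) = (\<lambda>j. if j \<in> A then s j else 0)" if "i \<notin> A" for r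
    using that by auto
  then show "utility v s i (sampling_mech sel v A (s(i := r))) \<le> utility v s i (sampling_mech sel v A s)"
    for r
    by (cases "i \<in> A") (simp_all add: sampling_mech_def Let_def utility_def)
qed

end

lemma log2nat_power [simp]: "log2nat (2 ^ L) = L"
  unfolding log2nat_def by (simp add: log_nat_power)

lemma kSS_mech_Inl [simp]: "kSS_mech sel v (Inl l) = bucket_mech sel v l"
  by (simp add: kSS_mech_def fun_eq_iff)

lemma kSS_mech_Inr [simp]: "kSS_mech sel v (Inr A) = sampling_mech sel v A"
  by (simp add: kSS_mech_def fun_eq_iff)

lemma set_pmf_kSS_coins:
  assumes "1 \<le> log2nat k"
  shows "set_pmf (kSS_coins k) \<subseteq> Inl ` {1..log2nat k} \<union> range Inr"
  using assms unfolding kSS_coins_def by (auto split: if_splits)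

lemma (in auction) kSS_mech_IC_IR:
  assumes "k = 2 ^ L" "1 \<le> L" "c \<in> set_pmf (kSS_coins k)"
  shows "ex_post_IC_IR k v (kSS_mech sel v c)"
proof -
  from assms set_pmf_kSS_coins[of k] consider l where "l \<in> {1..L}" "c = Inl l" | A where "c = Inr A"
    by auto
  then show ?thesis
  proof cases
    case 1
    have "l - 1 < L"
      using 1 by auto
    then have "(2::nat) ^ (l - 1) < k"
      using assms(1) by simp
    then show ?thesis
      using bucket_mech_IC_IR 1 by simp
  next
    case 2
    then show ?thesis
      using sampling_mech_IC_IR by simp
  qed
qed

section \<open>Welfare\<close>

lemma kSS_expectation:
  fixes F :: "nat + 'a::finite set \<Rightarrow> real"
  assumes L: "log2nat k = L" "1 \<le> L"
  shows "measure_pmf.expectation (kSS_coins k) F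
     = (\<Sum>l\<in>{1..L}. F (Inl l)) / (real L + 2)
       + (\<Sum>A\<in>UNIV. F (Inr A)) * (2 / (real L + 2)) / real (card (UNIV :: 'a set set))"
proof -
  define p where "p = real L / (real L + 2)"
  define N where "N = real (card (UNIV :: 'a set set))"
  have coins: "kSS_coins k = bind_pmf (bernoulli_pmf p)
       (\<lambda>b. if b then map_pmf Inl (pmf_of_set {1..L}) else map_pmf Inr (pmf_of_set (UNIV :: 'a set set)))"
    unfolding kSS_coins_def p_def L(1) ..
  have p: "0 \<le> p" "p \<le> 1"
    unfolding p_def by auto
  have pmf_Inl: "pmf (kSS_coins k :: (nat + 'a set) pmf) (Inl l) = p / real L" if "l \<in> {1..L}" for l
    using p that unfolding coins pmf_bind
    by (auto simp: pmf_map_inj' pmf_eq_0_set_pmf)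
  have pmf_Inr: "pmf (kSS_coins k) (Inr (A :: 'a set)) = (1 - p) / N" for A
    using p unfolding coins pmf_bind N_def
    by (auto simp: pmf_map_inj' pmf_eq_0_set_pmf)
  have "measure_pmf.expectation (kSS_coins k) F
      = (\<Sum>c\<in>Inl ` {1..L} \<union> range Inr. F c * pmf (kSS_coins k) c)"
    by (rule integral_measure_pmf_real) (use set_pmf_kSS_coins[of k] L in auto)
  also have "\<dots> = (\<Sum>l\<in>{1..L}. F (Inl l) * (p / real L)) + (\<Sum>A\<in>UNIV. F (Inr A) * ((1 - p) / N))"
    by (subst sum.union_disjoint) (auto simp: sum.reindex pmf_Inl pmf_Inr)
  also have "p / real L = 1 / (real L + 2)"
    using L(2) unfolding p_def by simp
  also have "1 - p = 2 / (real L + 2)"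
    unfolding p_def by (simp add: field_simps)
  finally show ?thesis
    unfolding N_def by (simp add: sum_divide_distrib sum_distrib_right)
qed

lemma opt_welfare_attained:
  fixes v :: "'a::finite \<Rightarrow> 'b::finite set \<Rightarrow> ('a \<Rightarrow> nat) \<Rightarrow> real"
  obtains X where "is_alloc X" "opt_welfare v s = welfare (\<lambda>i T. v i T s) X"
proof -
  have "is_alloc (\<lambda>_. {} :: 'b set)"
    by (simp add: is_alloc_def)
  then have "opt_welfare v s \<in> (\<lambda>X. welfare (\<lambda>i T. v i T s) X) ` {X. is_alloc X}"
    unfolding opt_welfare_def by (intro Max_in) auto
  then show ?thesis
    using that by blast
qed

definition in_bucket :: "nat \<Rightarrow> nat \<Rightarrow> bool" where
  "in_bucket l x \<longleftrightarrow> 2 ^ (l - 1) \<le> x \<and> x < 2 * 2 ^ (l - 1)"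

lemma in_bucket_exists: "1 \<le> x \<Longrightarrow> x < 2 ^ L \<Longrightarrow> \<exists>l\<in>{1..L}. in_bucket l x"
proof (induction L)
  case 0
  then show ?case by simp
next
  case (Suc L)
  show ?case
  proof (cases "x < 2 ^ L")
    case True
    with Suc show ?thesis
      by (meson atLeastAtMost_iff le_Suc_eq)
  next
    case False
    with Suc.prems show ?thesis
      by (intro bexI[of _ "Suc L"]) (auto simp: in_bucket_def)
  qed
qed

lemma le_sum_in_bucket:
  fixes c :: real
  assumes "0 \<le> c" "x < 2 ^ L" "x = 0 \<Longrightarrow> c = 0"
  shows "c \<le> (\<Sum>l\<in>{1..L}. if in_bucket l x then c else 0)"
proof (cases "x = 0")
  case True
  then show ?thesis
    using assms by (simp add: sum_nonneg)
next
  case False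
  with assms obtain l where "l \<in> {1..L}" "in_bucket l x"
    using in_bucket_exists[of x L] by auto
  then show ?thesis
    using assms(1) member_le_sum[of l "{1..L}" "\<lambda>l. if in_bucket l x then c else 0"] by auto
qed

context auction
begin

lemma bucket_mech_welfare:
  assumes s: "in_dom k s" and X: "is_alloc X"
  shows "(\<Sum>i\<in>UNIV. if in_bucket l (s i) then (v i (X i) s - v i (X i) (s(i := 0))) / 2 else 0)
     \<le> welfare (\<lambda>i T. v i T s) (fst (bucket_mech sel v l s))"
proof -
  define t :: nat where "t = 2 ^ (l - 1)"
  define NB where "NB = {i. t \<le> s i}"
  define sbar where "sbar = (\<lambda>j. if j \<in> NB then t else s j)"
  define Y where "Y = (\<lambda>i. if in_bucket l (s i) then X i else {})"
  have fst_bucket: "fst (bucket_mech sel v l s) = sel NB (\<lambda>i T. if i \<in> NB then v i T sbar else 0)"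
    unfolding bucket_mech_def Let_def NB_def sbar_def t_def by simp
  have below: "\<forall>j. sbar j \<le> s j"
    by (simp add: sbar_def NB_def)
  have Y: "alloc_among NB Y"
    using X by (auto simp: alloc_among_def is_alloc_def Y_def NB_def in_bucket_def t_def)
  have "(\<Sum>i\<in>UNIV. if in_bucket l (s i) then (v i (X i) s - v i (X i) (s(i := 0))) / 2 else 0)
      \<le> welfare (\<lambda>i T. if i \<in> NB then v i T sbar else 0) Y"
    unfolding welfare_def
  proof (intro sum_mono)
    fix i
    show "(if in_bucket l (s i) then (v i (X i) s - v i (X i) (s(i := 0))) / 2 else 0)
        \<le> (if i \<in> NB then v i (Y i) sbar else 0)"
    proof (cases "in_bucket l (s i)")
      case True
      then have "i \<in> NB" "sbar i = t"
        by (auto simp: in_bucket_def sbar_def NB_def t_def)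
      moreover have "v i (X i) s - v i (X i) (s(i := 0)) \<le> 2 * v i (X i) sbar"
        by (rule strong_SOS_bucket_bound[OF v_weakly_incr v_strong_SOS v_nonneg s _ _ below])
           (use True \<open>sbar i = t\<close> in \<open>auto simp: in_bucket_def t_def\<close>)
      ultimately show ?thesis
        using True by (simp add: Y_def)
    qed (simp add: Y_def)
  qed
  also have "\<dots> \<le> welfare (\<lambda>i T. v i T s) (fst (bucket_mech sel v l s))"
    unfolding fst_bucket by (rule welfare_sel_lower_bound[OF s below Y])
  finally show ?thesis .
qed

lemma sampling_mech_welfare:
  assumes s: "in_dom k s" and X: "is_alloc X"
  shows "(\<Sum>i\<in>UNIV. if i \<notin> A then v i (X i) (\<lambda>j. if j \<in> A then s j else 0) else 0)
     \<le> welfare (\<lambda>i T. v i T s) (fst (sampling_mech sel v A s))"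
proof -
  let ?sA = "\<lambda>j. if j \<in> A then s j else 0" and ?Y = "\<lambda>i. if i \<notin> A then X i else {}"
  have fst_sampling: "fst (sampling_mech sel v A s) = sel (- A) (\<lambda>i T. if i \<in> - A then v i T ?sA else 0)"
    by (simp add: sampling_mech_def Let_def)
  have "alloc_among (- A) ?Y"
    using X by (auto simp: alloc_among_def is_alloc_def)
  from welfare_sel_lower_bound[OF s _ this, of ?sA]
  show ?thesis
    unfolding fst_sampling welfare_def by (simp add: if_distrib cong: if_cong)
qed

lemma bucket_mech_welfare_sum:
  assumes s: "in_dom k s" and k: "k = 2 ^ L" and X: "is_alloc X"
  shows "(\<Sum>i\<in>UNIV. v i (X i) s - v i (X i) (s(i := 0))) / 2
     \<le> (\<Sum>l\<in>{1..L}. welfare (\<lambda>i T. v i T s) (fst (bucket_mech sel v l s)))"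
proof -
  let ?D = "\<lambda>i. (v i (X i) s - v i (X i) (s(i := 0))) / 2"
  have "(\<Sum>i\<in>UNIV. v i (X i) s - v i (X i) (s(i := 0))) / 2 = (\<Sum>i\<in>UNIV. ?D i)"
    by (simp add: sum_divide_distrib)
  also have "\<dots> \<le> (\<Sum>i\<in>UNIV. \<Sum>l\<in>{1..L}. if in_bucket l (s i) then ?D i else 0)"
  proof (intro sum_mono le_sum_in_bucket)
    fix i
    show "0 \<le> ?D i"
      using v_mono[OF s, of "s(i := 0)"] by simp
    show "s i < 2 ^ L"
      using s k by (simp add: in_dom_def)
    show "s i = 0 \<Longrightarrow> ?D i = 0"
      by (simp add: fun_upd_idem)
  qed
  also have "\<dots> = (\<Sum>l\<in>{1..L}. \<Sum>i\<in>UNIV. if in_bucket l (s i) then ?D i else 0)"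
    by (rule sum.swap)
  also have "\<dots> \<le> (\<Sum>l\<in>{1..L}. welfare (\<lambda>i T. v i T s) (fst (bucket_mech sel v l s)))"
    by (intro sum_mono bucket_mech_welfare[OF s X])
  finally show ?thesis .
qed

lemma sampling_mech_welfare_sum:
  assumes s: "in_dom k s" and X: "is_alloc X"
  shows "real (card (UNIV :: 'a set set)) / 4 * (\<Sum>i\<in>UNIV. v i (X i) (s(i := 0)))
     \<le> (\<Sum>A\<in>UNIV. welfare (\<lambda>i T. v i T s) (fst (sampling_mech sel v A s)))"
proof -
  let ?N = "real (card (UNIV :: 'a set set))"
  have "?N / 4 * (\<Sum>i\<in>UNIV. v i (X i) (s(i := 0))) = (\<Sum>i\<in>UNIV. ?N / 4 * v i (X i) (s(i := 0)))"
    by (simp add: sum_distrib_left)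
  also have "\<dots> \<le> (\<Sum>i\<in>UNIV. \<Sum>A\<in>UNIV. if i \<notin> A then v i (X i) (\<lambda>j. if j \<in> A then s j else 0) else 0)"
    by (intro sum_mono strong_SOS_sampling_bound[OF v_strong_SOS v_nonneg s])
  also have "\<dots> = (\<Sum>A\<in>UNIV. \<Sum>i\<in>UNIV. if i \<notin> A then v i (X i) (\<lambda>j. if j \<in> A then s j else 0) else 0)"
    by (rule sum.swap)
  also have "\<dots> \<le> (\<Sum>A\<in>UNIV. welfare (\<lambda>i T. v i T s) (fst (sampling_mech sel v A s)))"
    by (intro sum_mono sampling_mech_welfare[OF s X])
  finally show ?thesis .
qed

lemma kSS_mech_welfare_approx:
  assumes k: "k = 2 ^ L" "1 \<le> L" and s: "in_dom k s"
  shows "opt_welfare v s / (2 * log 2 (real k) + 4)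
     \<le> measure_pmf.expectation (kSS_coins k) (\<lambda>c. welfare (\<lambda>i T. v i T s) (fst (kSS_mech sel v c s)))"
proof -
  obtain X where X: "is_alloc X" "opt_welfare v s = welfare (\<lambda>i T. v i T s) X"
    by (rule opt_welfare_attained)
  define W where "W c = welfare (\<lambda>i T. v i T s) (fst (kSS_mech sel v c s))" for c
  define D where "D = (\<Sum>i\<in>UNIV. v i (X i) s - v i (X i) (s(i := 0)))"
  define Z where "Z = (\<Sum>i\<in>UNIV. v i (X i) (s(i := 0)))"
  define N where "N = real (card (UNIV :: 'a set set))"
  have N: "0 < N"
    by (simp add: N_def card_gt_0_iff)
  have opt: "opt_welfare v s = D + Z"
    by (simp add: X(2) welfare_def D_def Z_def sum_subtractf)
  have bucket: "D / 2 \<le> (\<Sum>l\<in>{1..L}. W (Inl l))"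
    using bucket_mech_welfare_sum[OF s k(1) X(1)] by (simp add: W_def D_def)
  have sampling: "N / 4 * Z \<le> (\<Sum>A\<in>UNIV. W (Inr A))"
    using sampling_mech_welfare_sum[OF s X(1)] by (simp add: W_def Z_def N_def)
  have denom: "2 * log 2 (real k) + 4 = 2 * (real L + 2)"
    by (simp add: k(1) log_nat_power)
  have split: "(D + Z) / (2 * c) = (D / 2) / c + (N / 4 * Z) * (2 / c) / N" if "0 < c" for c
    using N that by (simp add: field_simps)
  have "opt_welfare v s / (2 * log 2 (real k) + 4)
      = (D / 2) / (real L + 2) + (N / 4 * Z) * (2 / (real L + 2)) / N"
    unfolding opt denom by (rule split) simp
  also have "\<dots> \<le> (\<Sum>l\<in>{1..L}. W (Inl l)) / (real L + 2) + (\<Sum>A\<in>UNIV. W (Inr A)) * (2 / (real L + 2)) / N"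
    using bucket sampling N by (intro add_mono divide_right_mono mult_right_mono) auto
  also have "\<dots> = measure_pmf.expectation (kSS_coins k) W"
    unfolding N_def using kSS_expectation[of k L W] k by simp
  finally show ?thesis
    unfolding W_def .
qed

end

theorem mainTheorem10:
  fixes v :: "'a::finite \<Rightarrow> 'b::finite set \<Rightarrow> ('a \<Rightarrow> nat) \<Rightarrow> real"
    and sel :: "'a set \<Rightarrow> ('a \<Rightarrow> 'b set \<Rightarrow> real) \<Rightarrow> ('a \<Rightarrow> 'b set)"
    and k :: nat
  assumes "k \<ge> 2" and "\<exists>L::nat. k = 2 ^ L"
    and "valid_valuations k v"
    and "welfare_selector sel"
  shows "(\<forall>c \<in> set_pmf (kSS_coins k). ex_post_IC_IR k v (kSS_mech sel v c))
       \<and> (\<forall>s. in_dom k s \<longrightarrow>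
            opt_welfare v s / (2 * log 2 (real k) + 4)
              \<le> measure_pmf.expectation (kSS_coins k)
                   (\<lambda>c. welfare (\<lambda>i T. v i T s) (fst (kSS_mech sel v c s))))"
proof -
  obtain L where k: "k = 2 ^ L"
    using assms(2) by blast
  with assms(1) have L: "1 \<le> L"
    by (cases L) auto
  interpret auction k v sel
    using assms(3,4) by unfold_locales
  show ?thesis
    using kSS_mech_IC_IR[OF k L] kSS_mech_welfare_approx[OF k L] by blast
qed

end
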